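(* Let $k$ be a field of characteristic not $2$, $R,S$ $k$-algebras and $\tau:S\otimes R\to R\otimes S$ a twisting map. Suppose $R$-bimodule resolutions $C_\bullet,C'_\bullet$ of $R$ and $S$-bimodule resolutions $D_\bullet,D'_\bullet$ of $S$ are compatible with $\tau$, and $$\pi_R:C'_\bullet\to C_\bullet,\quad\iota_R:C_\bullet\to C'_\bullet,\quad\pi_S:D'_\bullet\to D_\bullet,\quad\iota_S:D_\bullet\to D'_\bullet$$ are chain maps of bimodule resolutions compatible with $\tau$ satisfying $\pi_R\iota_R=1_C$ and $\pi_S\iota_S=1_D$. Then $$\pi_R\otimes\pi_S:C'_\bullet\otimes_\tau D'_\bullet\to C_\bullet\otimes_\tau D_\bullet\quad\text{and}\quad\iota_R\otimes\iota_S:C_\bullet\otimes_\tau D_\bullet\to C'_\bullet\otimes_\tau D'_\bullet$$ are chain maps of bimodule resolutions of $R\otimes_\tau S$ with $(\pi_R\otimes\pi_S)(\iota_R\otimes\iota_S)=1_{C\otimes_\tau D}$. If in addition $R$ and $S$ are graded algebras and $\pi_R,\pi_S,\iota_R,\iota_S$ are graded chain maps of graded resolutions, then $\pi_R\otimes\pi_S$ and $\iota_R\otimes\iota_S$ are graded chain maps as well.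
   Context: Tensor products are over $k$, with the Koszul sign convention for graded maps. A twisting map is a bijective $k$-linear $\tau:S\otimes R\to R\otimes S$ with $\tau(1_S\otimes r)=r\otimes1_S$, $\tau(s\otimes1_R)=1_R\otimes s$ and $\tau(m_S\otimes m_R)=(m_R\otimes m_S)(1\otimes\tau\otimes1)(\tau\otimes\tau)(1\otimes\tau\otimes1)$; $R\otimes_\tau S$ is $R\otimes S$ with multiplication $(m_R\otimes m_S)(1\otimes\tau\otimes1)$. A bimodule resolution of an algebra $A$ is a complex of $A$-bimodules $P_\bullet$ with augmentation $P_0\to A$ making the augmented complex exact; chain maps of resolutions lift the identity of $A$. An $R$-bimodule resolution $C_\bullet$ of $R$ (action $\rho_C$) is compatible with $\tau$ via a bijective chain map $\tau_C:S\otimes C_\bullet\to C_\bullet\otimes S$ lifting $\tau$ with $\tau_C(m_S\otimes1)=(1\otimes m_S)(\tau_C\otimes1)(1\otimes\tau_C)$ and $\tau_C(1\otimes\rho_C)=(\rho_C\otimes1)(1\otimes1\otimes\tau)(1\otimes\tau_C\otimes1)(\tau\otimes1\otimes1)$. An $S$-bimodule resolution $D_\bullet$ of $S$ (action $\rho_D$) is compatible with $\tau$ via a bijective chain map $\tau_D:D_\bullet\otimes R\to R\otimes D_\bullet$ lifting $\tau$ with $\tau_D(1\otimes m_R)=(m_R\otimes1)(1\otimes\tau_D)(\tau_D\otimes1)$ and $\tau_D(\rho_D\otimes1)=(1\otimes\rho_D)(\tau\otimes1\otimes1)(1\otimes\tau_D\otimes1)(1\otimes1\otimes\tau)$. A chain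 map $\psi$ between compatible $R$-resolutions is compatible with $\tau$ if $(\psi\otimes1_S)\tau_C=\tau_{C'}(1_S\otimes\psi)$; between compatible $S$-resolutions if $(1_R\otimes\psi)\tau_D=\tau_{D'}(\psi\otimes1_R)$. The twisted product resolution $C_\bullet\otimes_\tau D_\bullet$ is the total complex $\bigoplus_{i+j=n}C_i\otimes D_j$ with differential $\partial_C\otimes1+1\otimes\partial_D$ and $(R\otimes_\tau S)$-bimodule structure $(\rho_C\otimes\rho_D)(1\otimes1\otimes\tau\otimes1\otimes1)(1\otimes\tau_C\otimes\tau_D\otimes1)$; it is a bimodule resolution of $R\otimes_\tau S$. *)

theory Defs
  imports Main "HOL-Library.Poly_Mapping"
begin

text \<open>
Every k-vector space is
represented together with a chosen basis indexed by a type 'a, i.e. as the space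
('a =>_0 'k) of finitely supported coefficient functions.  For graded
spaces/complexes the basis is chosen homogeneous, so a grading is a function on basis
indices.  The tensor product of ('a =>_0 'k) and ('b =>_0 'k) over k is then
canonically ('a * 'b =>_0 'k), with the bracketing recorded by the nesting of pairs.
\<close>

type_synonym ('a, 'k) vec = "'a \<Rightarrow>\<^sub>0 'k"

definition smul :: "'k::field \<Rightarrow> ('a, 'k) vec \<Rightarrow> ('a, 'k) vec" where
  "smul c x = Poly_Mapping.map (\<lambda>v. c * v) x"

definition lin :: "(('a, 'k::field) vec \<Rightarrow> ('b, 'k) vec) \<Rightarrow> bool" where
  "lin f \<longleftrightarrow> (\<forall>x y. f (x + y) = f x + f y) \<and> (\<forall>c x. f (smul c x) = smul c (f x))"

definition bv :: "'a \<Rightarrow> ('a, 'k::field) vec" where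
  "bv a = Poly_Mapping.single a 1"

definition lext :: "('a \<Rightarrow> ('b, 'k::field) vec) \<Rightarrow> ('a, 'k) vec \<Rightarrow> ('b, 'k) vec" where
  "lext g x = (\<Sum>a\<in>Poly_Mapping.keys x. smul (Poly_Mapping.lookup x a) (g a))"

definition tens :: "('a, 'k::field) vec \<Rightarrow> ('b, 'k) vec \<Rightarrow> ('a \<times> 'b, 'k) vec" where
  "tens x y = lext (\<lambda>a. lext (\<lambda>b. bv (a, b)) y) x"

text \<open>tensor product of linear maps  f \<otimes> g  (used only for maps where the Koszul
  sign is trivial, i.e. when g has homological degree 0)\<close>
definition tm :: "(('a, 'k::field) vec \<Rightarrow> ('c, 'k) vec) \<Rightarrow> (('b, 'k) vec \<Rightarrow> ('d, 'k) vec)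
     \<Rightarrow> ('a \<times> 'b, 'k) vec \<Rightarrow> ('c \<times> 'd, 'k) vec" where
  "tm f g = lext (\<lambda>(a, b). tens (f (bv a)) (g (bv b)))"

definition homog :: "('a \<Rightarrow> nat) \<Rightarrow> nat \<Rightarrow> ('a, 'k::zero) vec \<Rightarrow> bool" where
  "homog deg n x \<longleftrightarrow> (\<forall>a\<in>Poly_Mapping.keys x. deg a = n)"

definition k_algebra :: "(('r \<times> 'r, 'k::field) vec \<Rightarrow> ('r, 'k) vec) \<Rightarrow> ('r, 'k) vec \<Rightarrow> bool" where
  "k_algebra m u \<longleftrightarrow> lin m
     \<and> (\<forall>a b c. m (tens (m (tens (bv a) (bv b))) (bv c)) = m (tens (bv a) (m (tens (bv b) (bv c)))))
     \<and> (\<forall>x. m (tens u x) = x) \<and> (\<forall>x. m (tens x u) = x)"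

definition twisting_map ::
  "(('r \<times> 'r, 'k::field) vec \<Rightarrow> ('r, 'k) vec) \<Rightarrow> ('r, 'k) vec \<Rightarrow>
   (('s \<times> 's, 'k) vec \<Rightarrow> ('s, 'k) vec) \<Rightarrow> ('s, 'k) vec \<Rightarrow>
   (('s \<times> 'r, 'k) vec \<Rightarrow> ('r \<times> 's, 'k) vec) \<Rightarrow> bool" where
  "twisting_map mR uR mS uS \<tau> \<longleftrightarrow> lin \<tau> \<and> bij \<tau>
     \<and> (\<forall>r. \<tau> (tens uS r) = tens r uS) \<and> (\<forall>s. \<tau> (tens s uR) = tens uR s)
     \<and> \<tau> \<circ> tm mS mR =
        lext (\<lambda>((s, s'), (r, r')).
          lext (\<lambda>(r1, s1).
            lext (\<lambda>(r2, s2). lext (\<lambda>(r3, s3).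
              lext (\<lambda>(r4, s4). tens (mR (bv (r2, r4))) (mS (bv (s4, s3))))
                (\<tau> (bv (s2, r3))))
              (\<tau> (bv (s1, r'))))
            (\<tau> (bv (s, r1))))
          (\<tau> (bv (s', r))))"

text \<open>multiplication of the twisted tensor product algebra R \<otimes>_tau S:
  (m_R \<otimes> m_S)(1 \<otimes> tau \<otimes> 1)\<close>
definition tw_mult ::
  "(('r \<times> 'r, 'k::field) vec \<Rightarrow> ('r, 'k) vec) \<Rightarrow> (('s \<times> 's, 'k) vec \<Rightarrow> ('s, 'k) vec) \<Rightarrow>
   (('s \<times> 'r, 'k) vec \<Rightarrow> ('r \<times> 's, 'k) vec) \<Rightarrow> (('r \<times> 's) \<times> ('r \<times> 's), 'k) vec \<Rightarrow> ('r \<times> 's, 'k) vec" where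
  "tw_mult mR mS \<tau> = lext (\<lambda>((r, s), (r', s')).
      lext (\<lambda>(r1, s1). tens (mR (bv (r, r1))) (mS (bv (s1, s')))) (\<tau> (bv (s, r'))))"

text \<open>A bimodule complex over the algebra (m, u) with basis 'c, homological degree deg,
  differential d, action rho : A \<otimes> P \<otimes> A \<rightarrow> P (bracketed (A \<otimes> P) \<otimes> A);
  P_i is the span of the basis vectors of degree i.\<close>
definition bimod_complex ::
  "(('a \<times> 'a, 'k::field) vec \<Rightarrow> ('a, 'k) vec) \<Rightarrow> ('a, 'k) vec \<Rightarrow>
   ('c \<Rightarrow> nat) \<Rightarrow> (('c, 'k) vec \<Rightarrow> ('c, 'k) vec) \<Rightarrow> ((('a \<times> 'c) \<times> 'a, 'k) vec \<Rightarrow> ('c, 'k) vec) \<Rightarrow> bool" where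
  "bimod_complex m u deg d \<rho> \<longleftrightarrow>
     lin d \<and> lin \<rho>
     \<and> (\<forall>c. \<forall>b\<in>Poly_Mapping.keys (d (bv c)). deg b + 1 = deg c)
     \<and> d \<circ> d = (\<lambda>x. 0)
     \<and> (\<forall>r c r'. homog deg (deg c) (\<rho> (bv ((r, c), r'))))
     \<and> (\<forall>r1 r2 c r3 r4.
          \<rho> (tens (tens (m (tens (bv r1) (bv r2))) (bv c)) (m (tens (bv r3) (bv r4))))
          = \<rho> (tens (tens (bv r1) (\<rho> (tens (tens (bv r2) (bv c)) (bv r3)))) (bv r4)))
     \<and> (\<forall>x. \<rho> (tens (tens u x) u) = x)
     \<and> d \<circ> \<rho> = \<rho> \<circ> tm (tm id d) id"

text \<open>Bimodule resolution of the algebra A=(m,u) itself, with augmentation eps : P_0 \<rightarrow> A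
  (extended by zero to positive degrees); the augmented complex is exact.\<close>
definition bimod_resolution ::
  "(('a \<times> 'a, 'k::field) vec \<Rightarrow> ('a, 'k) vec) \<Rightarrow> ('a, 'k) vec \<Rightarrow>
   ('c \<Rightarrow> nat) \<Rightarrow> (('c, 'k) vec \<Rightarrow> ('c, 'k) vec) \<Rightarrow> ((('a \<times> 'c) \<times> 'a, 'k) vec \<Rightarrow> ('c, 'k) vec)
   \<Rightarrow> (('c, 'k) vec \<Rightarrow> ('a, 'k) vec) \<Rightarrow> bool" where
  "bimod_resolution m u deg d \<rho> \<epsilon> \<longleftrightarrow>
     bimod_complex m u deg d \<rho> \<and> lin \<epsilon>
     \<and> (\<forall>c. deg c \<noteq> 0 \<longrightarrow> \<epsilon> (bv c) = 0)
     \<and> \<epsilon> \<circ> \<rho> = lext (\<lambda>((r, c), r'). m (tens (m (tens (bv r) (\<epsilon> (bv c)))) (bv r')))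
     \<and> \<epsilon> \<circ> d = (\<lambda>x. 0)
     \<and> surj \<epsilon>
     \<and> (\<forall>n x. homog deg n x \<longrightarrow> (if n = 0 then \<epsilon> x = 0 else d x = 0)
            \<longrightarrow> (\<exists>y. homog deg (n + 1) y \<and> d y = x))"

definition chain_map_res ::
  "('c \<Rightarrow> nat) \<Rightarrow> (('c, 'k::field) vec \<Rightarrow> ('c, 'k) vec) \<Rightarrow> ((('a \<times> 'c) \<times> 'a, 'k) vec \<Rightarrow> ('c, 'k) vec)
   \<Rightarrow> (('c, 'k) vec \<Rightarrow> ('a, 'k) vec) \<Rightarrow>
   ('c2 \<Rightarrow> nat) \<Rightarrow> (('c2, 'k) vec \<Rightarrow> ('c2, 'k) vec) \<Rightarrow> ((('a \<times> 'c2) \<times> 'a, 'k) vec \<Rightarrow> ('c2, 'k) vec)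
   \<Rightarrow> (('c2, 'k) vec \<Rightarrow> ('a, 'k) vec) \<Rightarrow> (('c, 'k) vec \<Rightarrow> ('c2, 'k) vec) \<Rightarrow> bool" where
  "chain_map_res deg d \<rho> \<epsilon> deg' d' \<rho>' \<epsilon>' \<psi> \<longleftrightarrow>
     lin \<psi>
     \<and> (\<forall>c. homog deg' (deg c) (\<psi> (bv c)))
     \<and> \<psi> \<circ> d = d' \<circ> \<psi>
     \<and> \<psi> \<circ> \<rho> = \<rho>' \<circ> tm (tm id \<psi>) id
     \<and> \<epsilon>' \<circ> \<psi> = \<epsilon>"

definition compat_R ::
  "(('s \<times> 's, 'k::field) vec \<Rightarrow> ('s, 'k) vec) \<Rightarrow> (('s \<times> 'r, 'k) vec \<Rightarrow> ('r \<times> 's, 'k) vec) \<Rightarrow>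
   ('c \<Rightarrow> nat) \<Rightarrow> (('c, 'k) vec \<Rightarrow> ('c, 'k) vec) \<Rightarrow> ((('r \<times> 'c) \<times> 'r, 'k) vec \<Rightarrow> ('c, 'k) vec)
   \<Rightarrow> (('c, 'k) vec \<Rightarrow> ('r, 'k) vec) \<Rightarrow> (('s \<times> 'c, 'k) vec \<Rightarrow> ('c \<times> 's, 'k) vec) \<Rightarrow> bool" where
  "compat_R mS \<tau> deg d \<rho> \<epsilon> \<tau>C \<longleftrightarrow>
     lin \<tau>C \<and> bij \<tau>C
     \<and> (\<forall>s c. homog (\<lambda>(c', s'). deg c') (deg c) (\<tau>C (bv (s, c))))
     \<and> \<tau>C \<circ> tm id d = tm d id \<circ> \<tau>C
     \<and> tm \<epsilon> id \<circ> \<tau>C = \<tau> \<circ> tm id \<epsilon>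
     \<and> \<tau>C \<circ> tm mS id =
         lext (\<lambda>((s, s'), c). lext (\<lambda>(c1, s1).
            lext (\<lambda>(c2, s2). tens (bv c2) (mS (bv (s2, s1)))) (\<tau>C (bv (s, c1))))
          (\<tau>C (bv (s', c))))
     \<and> \<tau>C \<circ> tm id \<rho> =
         lext (\<lambda>(s, ((r, c), r')). lext (\<lambda>(r1, s1).
            lext (\<lambda>(c2, s2). lext (\<lambda>(r3, s3). tens (\<rho> (bv ((r1, c2), r3))) (bv s3))
              (\<tau> (bv (s2, r'))))
            (\<tau>C (bv (s1, c))))
          (\<tau> (bv (s, r))))"

definition compat_S ::
  "(('r \<times> 'r, 'k::field) vec \<Rightarrow> ('r, 'k) vec) \<Rightarrow> (('s \<times> 'r, 'k) vec \<Rightarrow> ('r \<times> 's, 'k) vec) \<Rightarrow>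
   ('d \<Rightarrow> nat) \<Rightarrow> (('d, 'k) vec \<Rightarrow> ('d, 'k) vec) \<Rightarrow> ((('s \<times> 'd) \<times> 's, 'k) vec \<Rightarrow> ('d, 'k) vec)
   \<Rightarrow> (('d, 'k) vec \<Rightarrow> ('s, 'k) vec) \<Rightarrow> (('d \<times> 'r, 'k) vec \<Rightarrow> ('r \<times> 'd, 'k) vec) \<Rightarrow> bool" where
  "compat_S mR \<tau> deg d \<rho> \<epsilon> \<tau>D \<longleftrightarrow>
     lin \<tau>D \<and> bij \<tau>D
     \<and> (\<forall>e r. homog (\<lambda>(r', e'). deg e') (deg e) (\<tau>D (bv (e, r))))
     \<and> \<tau>D \<circ> tm d id = tm id d \<circ> \<tau>D
     \<and> tm id \<epsilon> \<circ> \<tau>D = \<tau> \<circ> tm \<epsilon> id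
     \<and> \<tau>D \<circ> tm id mR =
         lext (\<lambda>(e, (r, r')). lext (\<lambda>(r1, e1).
            lext (\<lambda>(r2, e2). tens (mR (bv (r1, r2))) (bv e2)) (\<tau>D (bv (e1, r'))))
          (\<tau>D (bv (e, r))))
     \<and> \<tau>D \<circ> tm \<rho> id =
         lext (\<lambda>(((s, e), s'), r). lext (\<lambda>(r1, s1).
            lext (\<lambda>(r2, e2). lext (\<lambda>(r3, s3). tens (bv r3) (\<rho> (bv ((s3, e2), s1))))
              (\<tau> (bv (s, r2))))
            (\<tau>D (bv (e, r1))))
          (\<tau> (bv (s', r))))"

definition compat_map_R ::
  "(('s \<times> 'c, 'k::field) vec \<Rightarrow> ('c \<times> 's, 'k) vec) \<Rightarrow> (('s \<times> 'c2, 'k) vec \<Rightarrow> ('c2 \<times> 's, 'k) vec)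
   \<Rightarrow> (('c, 'k) vec \<Rightarrow> ('c2, 'k) vec) \<Rightarrow> bool" where
  "compat_map_R \<tau>C \<tau>C' \<psi> \<longleftrightarrow> tm \<psi> id \<circ> \<tau>C = \<tau>C' \<circ> tm id \<psi>"

definition compat_map_S ::
  "(('d \<times> 'r, 'k::field) vec \<Rightarrow> ('r \<times> 'd, 'k) vec) \<Rightarrow> (('d2 \<times> 'r, 'k) vec \<Rightarrow> ('r \<times> 'd2, 'k) vec)
   \<Rightarrow> (('d, 'k) vec \<Rightarrow> ('d2, 'k) vec) \<Rightarrow> bool" where
  "compat_map_S \<tau>D \<tau>D' \<psi> \<longleftrightarrow> tm id \<psi> \<circ> \<tau>D = \<tau>D' \<circ> tm \<psi> id"

definition tot_deg :: "('c \<Rightarrow> nat) \<Rightarrow> ('d \<Rightarrow> nat) \<Rightarrow> 'c \<times> 'd \<Rightarrow> nat" where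
  "tot_deg degC degD = (\<lambda>(c, e). degC c + degD e)"

definition tot_diff ::
  "('c \<Rightarrow> nat) \<Rightarrow> (('c, 'k::field) vec \<Rightarrow> ('c, 'k) vec) \<Rightarrow> (('d, 'k) vec \<Rightarrow> ('d, 'k) vec)
   \<Rightarrow> ('c \<times> 'd, 'k) vec \<Rightarrow> ('c \<times> 'd, 'k) vec" where
  "tot_diff degC dC dD = lext (\<lambda>(c, e).
     tens (dC (bv c)) (bv e) + smul ((-1) ^ degC c) (tens (bv c) (dD (bv e))))"

text \<open>(R \<otimes>_tau S)-bimodule action
  (rho_C \<otimes> rho_D)(1 \<otimes> 1 \<otimes> tau \<otimes> 1 \<otimes> 1)(1 \<otimes> tau_C \<otimes> tau_D \<otimes> 1)\<close>
type_synonym ('r, 's, 'c, 'd) tw_act_dom = "(('r \<times> 's) \<times> ('c \<times> 'd)) \<times> ('r \<times> 's)"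

definition tot_act ::
  "(('s \<times> 'r, 'k::field) vec \<Rightarrow> ('r \<times> 's, 'k) vec) \<Rightarrow>
   ((('r \<times> 'c) \<times> 'r, 'k) vec \<Rightarrow> ('c, 'k) vec) \<Rightarrow> ((('s \<times> 'd) \<times> 's, 'k) vec \<Rightarrow> ('d, 'k) vec) \<Rightarrow>
   (('s \<times> 'c, 'k) vec \<Rightarrow> ('c \<times> 's, 'k) vec) \<Rightarrow> (('d \<times> 'r, 'k) vec \<Rightarrow> ('r \<times> 'd, 'k) vec) \<Rightarrow>
   ((('r, 's, 'c, 'd) tw_act_dom, 'k) vec \<Rightarrow> ('c \<times> 'd, 'k) vec)" where
  "tot_act \<tau> \<rho>C \<rho>D \<tau>C \<tau>D = lext (\<lambda>(((r, s), (c, e)), (r', s')).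
     lext (\<lambda>(c1, s1). lext (\<lambda>(r1, e1).
       lext (\<lambda>(r2, s2). tens (\<rho>C (bv ((r, c1), r2))) (\<rho>D (bv ((s2, e1), s'))))
         (\<tau> (bv (s1, r1))))
       (\<tau>D (bv (e, r'))))
     (\<tau>C (bv (s, c))))"

text \<open>augmentation of C \<otimes>_tau D : eps_C \<otimes> eps_D on C_0 \<otimes> D_0 (zero elsewhere)\<close>
definition tot_aug ::
  "(('c, 'k::field) vec \<Rightarrow> ('r, 'k) vec) \<Rightarrow> (('d, 'k) vec \<Rightarrow> ('s, 'k) vec)
   \<Rightarrow> ('c \<times> 'd, 'k) vec \<Rightarrow> ('r \<times> 's, 'k) vec" where
  "tot_aug \<epsilon>C \<epsilon>D = tm \<epsilon>C \<epsilon>D"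

definition graded_algebra :: "('r \<Rightarrow> nat) \<Rightarrow> (('r \<times> 'r, 'k::field) vec \<Rightarrow> ('r, 'k) vec) \<Rightarrow> ('r, 'k) vec \<Rightarrow> bool" where
  "graded_algebra g m u \<longleftrightarrow> homog g 0 u \<and> (\<forall>a b. homog g (g a + g b) (m (bv (a, b))))"

definition graded_resolution ::
  "('a \<Rightarrow> nat) \<Rightarrow> ('c \<Rightarrow> nat) \<Rightarrow> (('c, 'k::field) vec \<Rightarrow> ('c, 'k) vec) \<Rightarrow>
   ((('a \<times> 'c) \<times> 'a, 'k) vec \<Rightarrow> ('c, 'k) vec) \<Rightarrow> (('c, 'k) vec \<Rightarrow> ('a, 'k) vec) \<Rightarrow> bool" where
  "graded_resolution gA g d \<rho> \<epsilon> \<longleftrightarrow>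
     (\<forall>c. homog g (g c) (d (bv c)))
     \<and> (\<forall>r c r'. homog g (gA r + g c + gA r') (\<rho> (bv ((r, c), r'))))
     \<and> (\<forall>c. homog gA (g c) (\<epsilon> (bv c)))"

definition graded_map :: "('c \<Rightarrow> nat) \<Rightarrow> ('c2 \<Rightarrow> nat) \<Rightarrow> (('c, 'k::field) vec \<Rightarrow> ('c2, 'k) vec) \<Rightarrow> bool" where
  "graded_map g g' \<psi> \<longleftrightarrow> (\<forall>c. homog g' (g c) (\<psi> (bv c)))"

end

theory Submission
  imports Defs
begin

text \<open>
  Everything is functoriality of the tensor product of linear maps.  On a basis tensor
  c \<otimes> e, the map \<psi>1 \<otimes> \<psi>2 commutes with the total differential because \<psi>1 preserves
  homological degree, so the Koszul signs (-1)^|c| on both sides agree; it commutes with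
  the twisted action because \<psi>1, \<psi>2 are bimodule maps that intertwine the twists \<tau>C, \<tau>D;
  and it respects the augmentations \<epsilon>C \<otimes> \<epsilon>D.  The splitting and the gradings are
  (\<pi>R \<otimes> \<pi>S)(\<iota>R \<otimes> \<iota>S) = \<pi>R\<iota>R \<otimes> \<pi>S\<iota>S and additivity of degrees in tensor products.
\<close>

lemma lookup_smul [simp]: "Poly_Mapping.lookup (smul c x) a = c * Poly_Mapping.lookup x a"
  by (simp add: smul_def Poly_Mapping.map.rep_eq when_def)

lemma lookup_bv: "Poly_Mapping.lookup (bv a) b = (if a = b then 1 else 0)"
  by (simp add: bv_def lookup_single when_def)

lemma smul_0 [simp]: "smul 0 x = 0"
  by (rule poly_mapping_eqI) simp

lemma sum_keys_lookup_delta: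
  fixes x :: "('a, 'k::field) vec"
  shows "(\<Sum>a\<in>Poly_Mapping.keys x. Poly_Mapping.lookup x a * (if a = b then c else 0))
    = Poly_Mapping.lookup x b * c"
  by (simp add: if_distrib sum.delta' in_keys_iff cong: if_cong)

lemma lookup_lext:
  "Poly_Mapping.lookup (lext g x) p
    = (\<Sum>a\<in>Poly_Mapping.keys x. Poly_Mapping.lookup x a * Poly_Mapping.lookup (g a) p)"
  by (simp add: lext_def lookup_sum)

lemma lookup_lext_superset:
  assumes "finite A" "Poly_Mapping.keys x \<subseteq> A"
  shows "Poly_Mapping.lookup (lext g x) p
    = (\<Sum>a\<in>A. Poly_Mapping.lookup x a * Poly_Mapping.lookup (g a) p)"
  unfolding lookup_lext
  by (rule sum.mono_neutral_left) (use assms in \<open>auto simp: in_keys_iff\<close>)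

lemma lext_bv [simp]: "lext g (bv a) = g a"
  by (rule poly_mapping_eqI) (simp add: lookup_lext bv_def)

lemma lext_bv_id [simp]: "lext bv x = x"
  by (rule poly_mapping_eqI) (simp add: lookup_lext lookup_bv sum_keys_lookup_delta)

lemma lext_cong: "(\<And>a. a \<in> Poly_Mapping.keys x \<Longrightarrow> h a = h' a) \<Longrightarrow> lext h x = lext h' x"
  unfolding lext_def by (rule sum.cong) auto

lemma lext_add: "lext g (x + y) = lext g x + lext g y"
proof (rule poly_mapping_eqI)
  fix p
  have "Poly_Mapping.keys (x + y) \<subseteq> Poly_Mapping.keys x \<union> Poly_Mapping.keys y"
    by (rule keys_add)
  then show "Poly_Mapping.lookup (lext g (x + y)) p = Poly_Mapping.lookup (lext g x + lext g y) p"
    by (simp add: lookup_add lookup_lext_superset[of "Poly_Mapping.keys x \<union> Poly_Mapping.keys y"]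
        sum.distrib distrib_right)
qed

lemma lext_smul: "lext g (smul c x) = smul c (lext g x)"
proof (rule poly_mapping_eqI)
  fix p
  have "Poly_Mapping.keys (smul c x) \<subseteq> Poly_Mapping.keys x"
    by (auto simp: in_keys_iff)
  then show "Poly_Mapping.lookup (lext g (smul c x)) p = Poly_Mapping.lookup (smul c (lext g x)) p"
    by (subst lookup_lext_superset[of "Poly_Mapping.keys x"])
       (simp_all add: lookup_lext sum_distrib_left mult.assoc)
qed

lemma lext_add_fun: "lext (\<lambda>a. h1 a + h2 a) x = lext h1 x + lext h2 x"
  by (rule poly_mapping_eqI) (simp add: lookup_lext lookup_add distrib_left sum.distrib)

lemma lext_smul_fun: "lext (\<lambda>a. smul c (h a)) x = smul c (lext h x)"
  by (rule poly_mapping_eqI) (simp add: lookup_lext sum_distrib_left mult.left_commute)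

lemma lin_lext [simp, intro]: "lin (lext g)"
  by (simp add: lin_def lext_add lext_smul)

lemma lin_id [simp, intro]: "lin id" and lin_ident [simp, intro]: "lin (\<lambda>x. x)"
  by (auto simp: lin_def)

lemma lin_comp: "lin F \<Longrightarrow> lin G \<Longrightarrow> lin (\<lambda>x. F (G x))"
  by (simp add: lin_def)

lemma lin_comp_fun: "lin F \<Longrightarrow> lin G \<Longrightarrow> lin (F \<circ> G)"
  by (simp add: lin_def)

lemma lin_add: "lin F \<Longrightarrow> F (x + y) = F x + F y"
  unfolding lin_def by blast

lemma lin_smul: "lin F \<Longrightarrow> F (smul c x) = smul c (F x)"
  unfolding lin_def by blast

lemma lin_zero: "lin F \<Longrightarrow> F 0 = 0"
  unfolding lin_def by (metis smul_0)

lemma lin_sum: "lin F \<Longrightarrow> F (sum h A) = (\<Sum>a\<in>A. F (h a))"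
  by (induction A rule: infinite_finite_induct) (auto simp: lin_zero lin_add)

lemma lin_lext_commute: "lin F \<Longrightarrow> F (lext h x) = lext (\<lambda>a. F (h a)) x"
  unfolding lext_def by (simp add: lin_sum lin_smul)

lemma lext_lext: "lext h (lext k x) = lext (\<lambda>a. lext h (k a)) x"
  by (rule lin_lext_commute) simp

lemma lin_eq_lext: "lin F \<Longrightarrow> F x = lext (\<lambda>a. F (bv a)) x"
  using lin_lext_commute[of F bv x] by simp

lemma lin_eq_on_basis:
  assumes "lin F" "lin G" "\<And>a. F (bv a) = G (bv a)"
  shows "F x = G x"
proof -
  have "F x = lext (\<lambda>a. F (bv a)) x" by (rule lin_eq_lext[OF assms(1)])
  also have "\<dots> = G x" by (simp add: assms(3) flip: lin_eq_lext[OF assms(2)])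
  finally show ?thesis .
qed

lemma lin_eqI:
  assumes "lin F" "lin G" "\<And>a. F (bv a) = G (bv a)"
  shows "F = G"
  by (rule ext) (rule lin_eq_on_basis[OF assms])

lemma lin_lext_param:
  assumes "\<And>a. lin (\<lambda>X. H X a)"
  shows "lin (\<lambda>X. lext (H X) T)"
  unfolding lin_def
proof (intro conjI allI)
  fix x y show "lext (H (x + y)) T = lext (H x) T + lext (H y) T"
    by (rule poly_mapping_eqI)
       (simp add: lookup_lext lookup_add lin_add[OF assms] distrib_left sum.distrib)
next
  fix c x show "lext (H (smul c x)) T = smul c (lext (H x) T)"
    by (rule poly_mapping_eqI)
       (simp add: lookup_lext lin_smul[OF assms] sum_distrib_left mult.left_commute)
qed

lemma lin_case_prod: "(\<And>p q. lin (\<lambda>X. F p q X)) \<Longrightarrow> lin (\<lambda>X. case a of (p, q) \<Rightarrow> F p q X)"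
  by (cases a) simp

lemma lookup_tens [simp]:
  "Poly_Mapping.lookup (tens x y) p
    = Poly_Mapping.lookup x (fst p) * Poly_Mapping.lookup y (snd p)"
proof -
  obtain a b where p: "p = (a, b)" by (cases p)
  have "Poly_Mapping.lookup (lext (\<lambda>b. bv (a', b)) y) (a, b)
      = (if a' = a then Poly_Mapping.lookup y b else 0)" for a'
    unfolding lookup_lext lookup_bv using sum_keys_lookup_delta[of y b 1]
    by (auto simp: if_distrib cong: if_cong)
  then show ?thesis
    unfolding p tens_def lookup_lext
    using sum_keys_lookup_delta[of x a "Poly_Mapping.lookup y b"] by (simp add: mult.commute)
qed

lemma tens_bv [simp]: "tens (bv a) (bv b) = bv (a, b)"
  by (rule poly_mapping_eqI) (auto simp: lookup_bv)

lemma tens_add_left: "tens (x + x') y = tens x y + tens x' y"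
  by (rule poly_mapping_eqI) (simp add: lookup_add distrib_right)

lemma tens_add_right: "tens x (y + y') = tens x y + tens x y'"
  by (rule poly_mapping_eqI) (simp add: lookup_add distrib_left)

lemma tens_smul_left: "tens (smul c x) y = smul c (tens x y)"
  by (rule poly_mapping_eqI) (simp add: mult.assoc)

lemma tens_smul_right: "tens x (smul c y) = smul c (tens x y)"
  by (rule poly_mapping_eqI) (simp add: mult.left_commute)

lemma lin_tens_left: "lin F \<Longrightarrow> lin (\<lambda>x. tens (F x) y)"
  by (simp add: lin_def tens_add_left tens_smul_left)

lemma lin_tens_right: "lin F \<Longrightarrow> lin (\<lambda>y. tens x (F y))"
  by (simp add: lin_def tens_add_right tens_smul_right)

lemma tens_lext_left: "tens (lext h x) y = lext (\<lambda>a. tens (h a) y) x"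
  by (rule lin_lext_commute[OF lin_tens_left[OF lin_ident]])

lemma tens_lext_right: "tens x (lext h y) = lext (\<lambda>b. tens x (h b)) y"
  by (rule lin_lext_commute[OF lin_tens_right[OF lin_ident]])

lemma lext_tens: "lext h (tens x y) = lext (\<lambda>a. lext (\<lambda>b. h (a, b)) y) x"
  unfolding tens_def lext_lext by simp

lemma tm_bv [simp]: "tm f g (bv (a, b)) = tens (f (bv a)) (g (bv b))"
  by (simp add: tm_def)

lemma lin_tm [simp, intro]: "lin (tm f g)"
  by (simp add: tm_def)

lemma tm_tens:
  assumes "lin f" "lin g"
  shows "tm f g (tens x y) = tens (f x) (g y)"
proof -
  have "tm f g (tens x y) = lext (\<lambda>a. lext (\<lambda>b. tens (f (bv a)) (g (bv b))) y) x"
    by (simp add: tm_def lext_tens)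
  also have "\<dots> = lext (\<lambda>a. tens (f (bv a)) (g y)) x"
    by (simp only: flip: tens_lext_right lin_eq_lext[OF assms(2)])
  also have "\<dots> = tens (f x) (g y)"
    by (simp only: flip: tens_lext_left lin_eq_lext[OF assms(1)])
  finally show ?thesis .
qed

lemma tm_comp:
  assumes "lin f" "lin g" "lin f'" "lin g'"
  shows "tm f g \<circ> tm f' g' = tm (f \<circ> f') (g \<circ> g')"
  by (rule lin_eqI) (auto simp: tm_tens assms intro: lin_comp_fun)

lemma tm_id: "tm id id = id"
  by (rule lin_eqI) auto

lemma homog_tens:
  assumes "homog g1 n x" "homog g2 m y"
  shows "homog (tot_deg g1 g2) (n + m) (tens x y)"
  using assms unfolding homog_def tot_deg_def by (auto simp: in_keys_iff)

lemma graded_map_tm: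
  assumes "graded_map g1 h1 f" "graded_map g2 h2 g"
  shows "graded_map (tot_deg g1 g2) (tot_deg h1 h2) (tm f g)"
  unfolding graded_map_def
proof
  fix p show "homog (tot_deg h1 h2) (tot_deg g1 g2 p) (tm f g (bv p))"
  proof (cases p)
    case (Pair c e)
    have "homog (tot_deg h1 h2) (g1 c + g2 e) (tens (f (bv c)) (g (bv e)))"
      using assms unfolding graded_map_def by (intro homog_tens) auto
    then show ?thesis by (simp add: Pair tot_deg_def)
  qed
qed

lemma chain_map_res_graded:
  "chain_map_res deg d \<rho> \<epsilon> deg' d' \<rho>' \<epsilon>' \<psi> \<Longrightarrow> graded_map deg deg' \<psi>"
  unfolding chain_map_res_def graded_map_def by blast

lemma lin_tot_diff: "lin (tot_diff deg d1 d2)"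
  unfolding tot_diff_def by simp

lemma tot_diff_tens:
  assumes "homog degC n x" "lin dC" "lin dD"
  shows "tot_diff degC dC dD (tens x y) = tens (dC x) y + smul ((-1) ^ n) (tens x (dD y))"
proof -
  have "tot_diff degC dC dD (tens x y) = lext (\<lambda>a. lext (\<lambda>b.
     tens (dC (bv a)) (bv b) + smul ((-1) ^ n) (tens (bv a) (dD (bv b)))) y) x"
    unfolding tot_diff_def lext_tens
    by (rule lext_cong) (use assms in \<open>auto simp: homog_def\<close>)
  also have "\<dots> = lext (\<lambda>a. tens (dC (bv a)) y + smul ((-1) ^ n) (tens (bv a) (dD y))) x"
    by (simp only: lext_add_fun lext_smul_fun flip: lin_eq_lext[OF assms(3)] tens_lext_right)
       simp
  also have "\<dots> = tens (dC x) y + smul ((-1) ^ n) (tens x (dD y))"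
    by (simp only: lext_add_fun lext_smul_fun flip: lin_eq_lext[OF assms(2)] tens_lext_left)
       simp
  finally show ?thesis .
qed

lemma tm_tot_diff:
  assumes "lin \<psi>1" "lin \<psi>2" "lin dB" "lin dB2"
    and "graded_map degA degB \<psi>1"
    and "\<psi>1 \<circ> dA = dB \<circ> \<psi>1" "\<psi>2 \<circ> dA2 = dB2 \<circ> \<psi>2"
  shows "tm \<psi>1 \<psi>2 \<circ> tot_diff degA dA dA2 = tot_diff degB dB dB2 \<circ> tm \<psi>1 \<psi>2"
proof (rule lin_eqI)
  fix p show "(tm \<psi>1 \<psi>2 \<circ> tot_diff degA dA dA2) (bv p) = (tot_diff degB dB dB2 \<circ> tm \<psi>1 \<psi>2) (bv p)"
  proof (cases p)
    case (Pair c e)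
    have "homog degB (degA c) (\<psi>1 (bv c))"
      using assms(5) by (simp add: graded_map_def)
    moreover have "tot_diff degA dA dA2 (bv (c, e))
      = tens (dA (bv c)) (bv e) + smul ((-1) ^ degA c) (tens (bv c) (dA2 (bv e)))"
      by (simp add: tot_diff_def)
    ultimately show ?thesis
      using fun_cong[OF assms(6)] fun_cong[OF assms(7)]
      by (simp add: Pair lin_add lin_smul tm_tens assms(1-4) tot_diff_tens)
  qed
qed (auto intro: lin_comp_fun lin_tot_diff)

text \<open>
  The map (P \<otimes> Q)(1 \<otimes> \<tau> \<otimes> 1) on (C \<otimes> S) \<otimes> (R \<otimes> D), with P and Q given on basis
  vectors.  After \<tau>C and \<tau>D have been applied, the action of R \<otimes>_\<tau> S on C \<otimes>_\<tau> D has this shape.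
\<close>
definition twist_middle ::
  "(('s \<times> 'r, 'k::field) vec \<Rightarrow> ('r \<times> 's, 'k) vec) \<Rightarrow> ('c \<Rightarrow> 'r \<Rightarrow> ('x, 'k) vec)
   \<Rightarrow> ('s \<Rightarrow> 'd \<Rightarrow> ('y, 'k) vec) \<Rightarrow> ('c \<times> 's, 'k) vec \<Rightarrow> ('r \<times> 'd, 'k) vec \<Rightarrow> ('x \<times> 'y, 'k) vec"
  where
  "twist_middle \<tau> P Q u w = lext (\<lambda>(c, s). lext (\<lambda>(r, e).
      lext (\<lambda>(r', s'). tens (P c r') (Q s' e)) (\<tau> (bv (s, r)))) w) u"

lemma lin_twist_middle_left: "lin (\<lambda>u. twist_middle \<tau> P Q u w)"
  unfolding twist_middle_def by simp

lemma lin_twist_middle_right: "lin (\<lambda>w. twist_middle \<tau> P Q u w)"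
  unfolding twist_middle_def by (intro lin_lext_param lin_case_prod) simp

lemma twist_middle_tm_left:
  assumes "\<And>r. lin (P r)" "lin f"
  shows "twist_middle \<tau> (\<lambda>c r. P r (bv c)) Q (tm f id u) w
    = twist_middle \<tau> (\<lambda>c r. P r (f (bv c))) Q u w"
proof -
  define G where "G s X = lext (\<lambda>(r, e).
      lext (\<lambda>(r', s'). tens (P r' X) (Q s' e)) (\<tau> (bv (s, r)))) w" for s X
  have lin_G: "lin (G s)" for s
    unfolding G_def by (intro lin_lext_param lin_case_prod lin_tens_left assms)
  have "twist_middle \<tau> (\<lambda>c r. P r (bv c)) Q (tm f id u) w = lext (\<lambda>(c, s). G s (bv c)) (tm f id u)"
    unfolding twist_middle_def G_def by simp
  also have "\<dots> = lext (\<lambda>(c, s). G s (f (bv c))) u"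
    unfolding tm_def lext_lext
    by (rule lext_cong) (auto simp: lext_tens simp flip: lin_eq_lext[OF lin_G])
  also have "\<dots> = twist_middle \<tau> (\<lambda>c r. P r (f (bv c))) Q u w"
    unfolding twist_middle_def G_def by simp
  finally show ?thesis .
qed

lemma twist_middle_tm_right:
  assumes "\<And>s. lin (Q s)" "lin g"
  shows "twist_middle \<tau> P (\<lambda>s e. Q s (bv e)) u (tm id g w)
    = twist_middle \<tau> P (\<lambda>s e. Q s (g (bv e))) u w"
proof -
  define H where "H c s r Y = lext (\<lambda>(r', s'). tens (P c r') (Q s' Y)) (\<tau> (bv (s, r)))"
    for c s r Y
  have lin_H: "lin (H c s r)" for c s r
    unfolding H_def by (intro lin_lext_param lin_case_prod lin_tens_right assms)
  have "twist_middle \<tau> P (\<lambda>s e. Q s (bv e)) u (tm id g w)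
      = lext (\<lambda>(c, s). lext (\<lambda>(r, e). H c s r (bv e)) (tm id g w)) u"
    unfolding twist_middle_def H_def by simp
  also have "\<dots> = lext (\<lambda>(c, s). lext (\<lambda>(r, e). H c s r (g (bv e))) w) u"
    unfolding tm_def lext_lext
    by (rule lext_cong, clarsimp, rule lext_cong)
       (auto simp: lext_tens simp flip: lin_eq_lext[OF lin_H])
  also have "\<dots> = twist_middle \<tau> P (\<lambda>s e. Q s (g (bv e))) u w"
    unfolding twist_middle_def H_def by simp
  finally show ?thesis .
qed

lemma tm_twist_middle:
  assumes "lin F" "lin G"
  shows "tm F G (twist_middle \<tau> P Q u w) = twist_middle \<tau> (\<lambda>c r. F (P c r)) (\<lambda>s e. G (Q s e)) u w"
  unfolding twist_middle_def
  by (simp add: case_prod_unfold lin_lext_commute[OF lin_tm] tm_tens assms)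

lemma lin_tot_act: "lin (tot_act \<tau> \<rho>C \<rho>D \<tau>C \<tau>D)"
  unfolding tot_act_def by simp

lemma tot_act_tens:
  assumes "lin \<tau>C" "lin \<tau>D"
  shows "tot_act \<tau> \<rho>C \<rho>D \<tau>C \<tau>D (tens (tens (bv (r, s)) (tens X Y)) (bv (r', s')))
    = twist_middle \<tau> (\<lambda>c r2. \<rho>C (bv ((r, c), r2))) (\<lambda>s2 e. \<rho>D (bv ((s2, e), s')))
        (\<tau>C (tens (bv s) X)) (\<tau>D (tens Y (bv r')))"
proof (rule lin_eq_on_basis[where x = X])
  let ?act = "tot_act \<tau> \<rho>C \<rho>D \<tau>C \<tau>D"
  let ?tw = "twist_middle \<tau> (\<lambda>c r2. \<rho>C (bv ((r, c), r2))) (\<lambda>s2 e. \<rho>D (bv ((s2, e), s')))"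
  show "lin (\<lambda>X. ?act (tens (tens (bv (r, s)) (tens X Y)) (bv (r', s'))))"
    by (intro lin_comp[OF lin_tot_act] lin_tens_left lin_tens_right lin_ident)
  show "lin (\<lambda>X. ?tw (\<tau>C (tens (bv s) X)) (\<tau>D (tens Y (bv r'))))"
    by (intro lin_comp[OF lin_twist_middle_left] lin_comp[OF assms(1)] lin_tens_right lin_ident)
  fix c show "?act (tens (tens (bv (r, s)) (tens (bv c) Y)) (bv (r', s')))
    = ?tw (\<tau>C (tens (bv s) (bv c))) (\<tau>D (tens Y (bv r')))"
  proof (rule lin_eq_on_basis[where x = Y])
    show "lin (\<lambda>Y. ?act (tens (tens (bv (r, s)) (tens (bv c) Y)) (bv (r', s'))))"
      by (intro lin_comp[OF lin_tot_act] lin_tens_left lin_tens_right lin_ident)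
    show "lin (\<lambda>Y. ?tw (\<tau>C (tens (bv s) (bv c))) (\<tau>D (tens Y (bv r'))))"
      by (intro lin_comp[OF lin_twist_middle_right] lin_comp[OF assms(2)] lin_tens_left lin_ident)
  qed (simp add: tot_act_def twist_middle_def)
qed

lemma tm_tot_act:
  assumes lin: "lin \<psi>1" "lin \<psi>2" "lin \<rho>B" "lin \<rho>B2" "lin \<tau>B" "lin \<tau>B2"
    and bimod1: "\<psi>1 \<circ> \<rho>A = \<rho>B \<circ> tm (tm id \<psi>1) id"
    and bimod2: "\<psi>2 \<circ> \<rho>A2 = \<rho>B2 \<circ> tm (tm id \<psi>2) id"
    and twist1: "compat_map_R \<tau>A \<tau>B \<psi>1"
    and twist2: "compat_map_S \<tau>A2 \<tau>B2 \<psi>2"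
  shows "tm \<psi>1 \<psi>2 \<circ> tot_act \<tau> \<rho>A \<rho>A2 \<tau>A \<tau>A2
    = tot_act \<tau> \<rho>B \<rho>B2 \<tau>B \<tau>B2 \<circ> tm (tm id (tm \<psi>1 \<psi>2)) id"
proof (rule lin_eqI)
  fix p
  show "(tm \<psi>1 \<psi>2 \<circ> tot_act \<tau> \<rho>A \<rho>A2 \<tau>A \<tau>A2) (bv p)
    = (tot_act \<tau> \<rho>B \<rho>B2 \<tau>B \<tau>B2 \<circ> tm (tm id (tm \<psi>1 \<psi>2)) id) (bv p)"
  proof -
    obtain r s c e r' s' where p: "p = (((r, s), (c, e)), (r', s'))"
      by (metis prod.exhaust)
    define P where "P r2 X = \<rho>B (tens (tens (bv r) X) (bv r2))" for r2 X
    define Q where "Q s2 Y = \<rho>B2 (tens (tens (bv s2) Y) (bv s'))" for s2 Y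
    have lin_P: "lin (P r2)" for r2
      unfolding P_def by (intro lin_comp[OF lin(3)] lin_tens_left lin_tens_right lin_ident)
    have lin_Q: "lin (Q s2)" for s2
      unfolding Q_def by (intro lin_comp[OF lin(4)] lin_tens_left lin_tens_right lin_ident)
    have "tm \<psi>1 \<psi>2 (tot_act \<tau> \<rho>A \<rho>A2 \<tau>A \<tau>A2 (bv p))
        = tm \<psi>1 \<psi>2 (twist_middle \<tau> (\<lambda>c r2. \<rho>A (bv ((r, c), r2))) (\<lambda>s2 e. \<rho>A2 (bv ((s2, e), s')))
            (\<tau>A (bv (s, c))) (\<tau>A2 (bv (e, r'))))"
      by (simp add: p tot_act_def twist_middle_def)
    also have "\<dots> = twist_middle \<tau> (\<lambda>c r2. P r2 (\<psi>1 (bv c))) (\<lambda>s2 e. Q s2 (\<psi>2 (bv e)))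
        (\<tau>A (bv (s, c))) (\<tau>A2 (bv (e, r')))"
      using fun_cong[OF bimod1] fun_cong[OF bimod2]
      by (simp add: tm_twist_middle lin P_def Q_def)
    also have "\<dots> = twist_middle \<tau> (\<lambda>c r2. P r2 (bv c)) (\<lambda>s2 e. Q s2 (bv e))
        (tm \<psi>1 id (\<tau>A (bv (s, c)))) (tm id \<psi>2 (\<tau>A2 (bv (e, r'))))"
      by (simp add: twist_middle_tm_left[OF lin_P lin(1)] twist_middle_tm_right[OF lin_Q lin(2)])
    also have "\<dots> = tot_act \<tau> \<rho>B \<rho>B2 \<tau>B \<tau>B2 (tm (tm id (tm \<psi>1 \<psi>2)) id (bv p))"
      using fun_cong[OF twist1[unfolded compat_map_R_def]] fun_cong[OF twist2[unfolded compat_map_S_def]]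
      by (simp add: p tot_act_tens lin P_def Q_def)
    finally show ?thesis by simp
  qed
qed (auto intro: lin_comp_fun lin_tot_act)

lemma tm_tot_aug:
  assumes "lin \<psi>1" "lin \<psi>2" "lin \<epsilon>B" "lin \<epsilon>B2" "\<epsilon>B \<circ> \<psi>1 = \<epsilon>A" "\<epsilon>B2 \<circ> \<psi>2 = \<epsilon>A2"
  shows "tot_aug \<epsilon>B \<epsilon>B2 \<circ> tm \<psi>1 \<psi>2 = tot_aug \<epsilon>A \<epsilon>A2"
  unfolding tot_aug_def by (simp add: tm_comp assms)

lemma chain_map_res_tm:
  assumes chain1: "chain_map_res degA dA \<rho>A \<epsilon>A degB dB \<rho>B \<epsilon>B \<psi>1"
    and chain2: "chain_map_res degA2 dA2 \<rho>A2 \<epsilon>A2 degB2 dB2 \<rho>B2 \<epsilon>B2 \<psi>2"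
    and twist1: "compat_map_R \<tau>A \<tau>B \<psi>1"
    and twist2: "compat_map_S \<tau>A2 \<tau>B2 \<psi>2"
    and lin: "lin dB" "lin dB2" "lin \<rho>B" "lin \<rho>B2" "lin \<tau>B" "lin \<tau>B2" "lin \<epsilon>B" "lin \<epsilon>B2"
  shows "chain_map_res
     (tot_deg degA degA2) (tot_diff degA dA dA2) (tot_act \<tau> \<rho>A \<rho>A2 \<tau>A \<tau>A2) (tot_aug \<epsilon>A \<epsilon>A2)
     (tot_deg degB degB2) (tot_diff degB dB dB2) (tot_act \<tau> \<rho>B \<rho>B2 \<tau>B \<tau>B2) (tot_aug \<epsilon>B \<epsilon>B2)
     (tm \<psi>1 \<psi>2)"
proof -
  have graded: "graded_map (tot_deg degA degA2) (tot_deg degB degB2) (tm \<psi>1 \<psi>2)"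
    using chain1 chain2 by (intro graded_map_tm chain_map_res_graded)
  from chain1 chain2 have "lin \<psi>1" "lin \<psi>2" "graded_map degA degB \<psi>1"
    and "\<psi>1 \<circ> dA = dB \<circ> \<psi>1" "\<psi>1 \<circ> \<rho>A = \<rho>B \<circ> tm (tm id \<psi>1) id" "\<epsilon>B \<circ> \<psi>1 = \<epsilon>A"
    and "\<psi>2 \<circ> dA2 = dB2 \<circ> \<psi>2" "\<psi>2 \<circ> \<rho>A2 = \<rho>B2 \<circ> tm (tm id \<psi>2) id" "\<epsilon>B2 \<circ> \<psi>2 = \<epsilon>A2"
    unfolding chain_map_res_def graded_map_def by auto
  with lin twist1 twist2 graded show ?thesis
    unfolding chain_map_res_def graded_map_def[symmetric]
    by (simp add: tm_tot_diff tm_tot_act tm_tot_aug)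
qed

lemma bimod_resolution_lin:
  assumes "bimod_resolution m u deg d \<rho> \<epsilon>"
  shows "lin d" "lin \<rho>" "lin \<epsilon>"
  using assms unfolding bimod_resolution_def bimod_complex_def by auto

lemma compat_R_lin: "compat_R mS \<tau> deg d \<rho> \<epsilon> \<tau>C \<Longrightarrow> lin \<tau>C"
  unfolding compat_R_def by blast

lemma compat_S_lin: "compat_S mR \<tau> deg d \<rho> \<epsilon> \<tau>D \<Longrightarrow> lin \<tau>D"
  unfolding compat_S_def by blast

lemma chain_map_res_lin: "chain_map_res deg d \<rho> \<epsilon> deg' d' \<rho>' \<epsilon>' \<psi> \<Longrightarrow> lin \<psi>"
  unfolding chain_map_res_def by blast

theorem theorem8p1:
  fixes mR :: "('r \<times> 'r, 'k::field) vec \<Rightarrow> ('r, 'k) vec" and uR :: "('r, 'k) vec"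
    and mS :: "('s \<times> 's, 'k) vec \<Rightarrow> ('s, 'k) vec" and uS :: "('s, 'k) vec"
    and \<tau> :: "('s \<times> 'r, 'k) vec \<Rightarrow> ('r \<times> 's, 'k) vec"
    and degC :: "'c \<Rightarrow> nat" and dC :: "('c, 'k) vec \<Rightarrow> ('c, 'k) vec"
    and \<rho>C :: "(('r \<times> 'c) \<times> 'r, 'k) vec \<Rightarrow> ('c, 'k) vec" and \<epsilon>C :: "('c, 'k) vec \<Rightarrow> ('r, 'k) vec"
    and \<tau>C :: "('s \<times> 'c, 'k) vec \<Rightarrow> ('c \<times> 's, 'k) vec"
    and degC' :: "'c2 \<Rightarrow> nat" and dC' :: "('c2, 'k) vec \<Rightarrow> ('c2, 'k) vec"
    and \<rho>C' :: "(('r \<times> 'c2) \<times> 'r, 'k) vec \<Rightarrow> ('c2, 'k) vec" and \<epsilon>C' :: "('c2, 'k) vec \<Rightarrow> ('r, 'k) vec"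
    and \<tau>C' :: "('s \<times> 'c2, 'k) vec \<Rightarrow> ('c2 \<times> 's, 'k) vec"
    and degD :: "'d \<Rightarrow> nat" and dD :: "('d, 'k) vec \<Rightarrow> ('d, 'k) vec"
    and \<rho>D :: "(('s \<times> 'd) \<times> 's, 'k) vec \<Rightarrow> ('d, 'k) vec" and \<epsilon>D :: "('d, 'k) vec \<Rightarrow> ('s, 'k) vec"
    and \<tau>D :: "('d \<times> 'r, 'k) vec \<Rightarrow> ('r \<times> 'd, 'k) vec"
    and degD' :: "'d2 \<Rightarrow> nat" and dD' :: "('d2, 'k) vec \<Rightarrow> ('d2, 'k) vec"
    and \<rho>D' :: "(('s \<times> 'd2) \<times> 's, 'k) vec \<Rightarrow> ('d2, 'k) vec" and \<epsilon>D' :: "('d2, 'k) vec \<Rightarrow> ('s, 'k) vec"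
    and \<tau>D' :: "('d2 \<times> 'r, 'k) vec \<Rightarrow> ('r \<times> 'd2, 'k) vec"
    and \<pi>R :: "('c2, 'k) vec \<Rightarrow> ('c, 'k) vec" and \<iota>R :: "('c, 'k) vec \<Rightarrow> ('c2, 'k) vec"
    and \<pi>S :: "('d2, 'k) vec \<Rightarrow> ('d, 'k) vec" and \<iota>S :: "('d, 'k) vec \<Rightarrow> ('d2, 'k) vec"
  assumes char: "(2::'k) \<noteq> 0"
    and algR: "k_algebra mR uR" and algS: "k_algebra mS uS"
    and tw: "twisting_map mR uR mS uS \<tau>"
    and resC: "bimod_resolution mR uR degC dC \<rho>C \<epsilon>C"
    and resC': "bimod_resolution mR uR degC' dC' \<rho>C' \<epsilon>C'"
    and resD: "bimod_resolution mS uS degD dD \<rho>D \<epsilon>D"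
    and resD': "bimod_resolution mS uS degD' dD' \<rho>D' \<epsilon>D'"
    and cC: "compat_R mS \<tau> degC dC \<rho>C \<epsilon>C \<tau>C"
    and cC': "compat_R mS \<tau> degC' dC' \<rho>C' \<epsilon>C' \<tau>C'"
    and cD: "compat_S mR \<tau> degD dD \<rho>D \<epsilon>D \<tau>D"
    and cD': "compat_S mR \<tau> degD' dD' \<rho>D' \<epsilon>D' \<tau>D'"
    and piR: "chain_map_res degC' dC' \<rho>C' \<epsilon>C' degC dC \<rho>C \<epsilon>C \<pi>R"
    and iotaR: "chain_map_res degC dC \<rho>C \<epsilon>C degC' dC' \<rho>C' \<epsilon>C' \<iota>R"
    and piS: "chain_map_res degD' dD' \<rho>D' \<epsilon>D' degD dD \<rho>D \<epsilon>D \<pi>S"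
    and iotaS: "chain_map_res degD dD \<rho>D \<epsilon>D degD' dD' \<rho>D' \<epsilon>D' \<iota>S"
    and cpiR: "compat_map_R \<tau>C' \<tau>C \<pi>R" and ciotaR: "compat_map_R \<tau>C \<tau>C' \<iota>R"
    and cpiS: "compat_map_S \<tau>D' \<tau>D \<pi>S" and ciotaS: "compat_map_S \<tau>D \<tau>D' \<iota>S"
    and splitR: "\<pi>R \<circ> \<iota>R = id" and splitS: "\<pi>S \<circ> \<iota>S = id"
  shows
    "chain_map_res (tot_deg degC' degD') (tot_diff degC' dC' dD') (tot_act \<tau> \<rho>C' \<rho>D' \<tau>C' \<tau>D')
        (tot_aug \<epsilon>C' \<epsilon>D')
        (tot_deg degC degD) (tot_diff degC dC dD) (tot_act \<tau> \<rho>C \<rho>D \<tau>C \<tau>D) (tot_aug \<epsilon>C \<epsilon>D)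
        (tm \<pi>R \<pi>S)
     \<and> chain_map_res (tot_deg degC degD) (tot_diff degC dC dD) (tot_act \<tau> \<rho>C \<rho>D \<tau>C \<tau>D)
        (tot_aug \<epsilon>C \<epsilon>D)
        (tot_deg degC' degD') (tot_diff degC' dC' dD') (tot_act \<tau> \<rho>C' \<rho>D' \<tau>C' \<tau>D') (tot_aug \<epsilon>C' \<epsilon>D')
        (tm \<iota>R \<iota>S)
     \<and> tm \<pi>R \<pi>S \<circ> tm \<iota>R \<iota>S = id
     \<and> (\<forall>(gR :: 'r \<Rightarrow> nat) (gS :: 's \<Rightarrow> nat) (gC :: 'c \<Rightarrow> nat) (gC' :: 'c2 \<Rightarrow> nat)
          (gD :: 'd \<Rightarrow> nat) (gD' :: 'd2 \<Rightarrow> nat).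
          graded_algebra gR mR uR \<and> graded_algebra gS mS uS
          \<and> graded_resolution gR gC dC \<rho>C \<epsilon>C \<and> graded_resolution gR gC' dC' \<rho>C' \<epsilon>C'
          \<and> graded_resolution gS gD dD \<rho>D \<epsilon>D \<and> graded_resolution gS gD' dD' \<rho>D' \<epsilon>D'
          \<and> graded_map gC' gC \<pi>R \<and> graded_map gC gC' \<iota>R
          \<and> graded_map gD' gD \<pi>S \<and> graded_map gD gD' \<iota>S
          \<longrightarrow> graded_map (tot_deg gC' gD') (tot_deg gC gD) (tm \<pi>R \<pi>S)
            \<and> graded_map (tot_deg gC gD) (tot_deg gC' gD') (tm \<iota>R \<iota>S))"
proof -
  note lin = bimod_resolution_lin[OF resC] bimod_resolution_lin[OF resC']
    bimod_resolution_lin[OF resD] bimod_resolution_lin[OF resD']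
    compat_R_lin[OF cC] compat_R_lin[OF cC'] compat_S_lin[OF cD] compat_S_lin[OF cD']
  have split: "tm \<pi>R \<pi>S \<circ> tm \<iota>R \<iota>S = id"
    using piR iotaR piS iotaS
    by (simp add: tm_comp chain_map_res_lin splitR splitS tm_id)
  show ?thesis
    using chain_map_res_tm[OF piR piS cpiR cpiS] chain_map_res_tm[OF iotaR iotaS ciotaR ciotaS]
      lin split
    by (auto intro: graded_map_tm)
qed

end
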